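(* Assume every vertex of $T$ has at least two successors and that $\nu$ is a doubling measure on $(\partial T,\rho)$. Let $b\in L^1_{\mathrm{loc}}(\partial T,\nu)$. The following are equivalent: (i) $b\in BMO$; (ii) there is a function $f:[0,\infty)\times(0,\infty)\to[0,\infty)$ (depending on $b$), nondecreasing in its first variable, such that for every operator $\mathcal K\in\mathcal O$, with kernel $K$ having constants $C_K$ and $\alpha$ as in conditions (A2) and (A3), the measure $\sigma=|\mathcal Kb|\,m_\nu$ on $T$ satisfies $$\sigma(T_v)=\sum_{x\in T_v}|\mathcal Kb(x)|\,m_\nu(x)\le f(C_K,\alpha)\,m_\nu(v)\qquad\forall v\in T,$$ where $\mathcal Kb(x)=\int_{\partial T}K(x,\omega)b(\omega)\,d\nu(\omega)$.
   Context: Let $T$ be a tree, identified with its vertex set, with graph distance $d$; $x\sim y$ means $d(x,y)=1$. Let $\Omega$ be the boundary (space of ends) of $T$; fix $\omega_*\in\Omega$ and set $\partial T=\Omega\setminus\{\omega_*\}$. For $x\in T$, $[x,\omega_* )$ is the geodesic ray from $x$ to $\omega_*$; for $\omega\in\partial T$, $(\omega,\omega_* )$ is the doubly infinite geodesic joining $\omega$ and $\omega_*$. For $y\in T$ write $x\le y$ if either $x\in T$ and $y\in[x,\omega_* )$, or $x\in\partial T$ and $y\in(x,\omega_* )$. Fix $o\in T$ and let $(x_j)_{j\ge0}$ enumerate $[o,\omega_* )$ with $x_0=o$, $x_j\sim x_{j+1}$; the level is $\ell(x)=\lim_{j\to\infty}(j-d(x,x_j))$. Successors: $s(x)=\{y\sim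 x:\ell(y)=\ell(x)-1\}$. The confluent $\eta\wedge\zeta$ of $\eta,\zeta\in T\cup\partial T$ is the vertex of minimal level among $x\in T$ with $\eta\le x$, $\zeta\le x$. Sectors: $T_x=\{y\in T:y\le x\}$, $\partial T_x=\{\omega\in\partial T:\omega\le x\}$. Gromov distance: $\rho(\eta,\xi)=e^{\ell(\eta\wedge\xi)}$ for $\eta\ne\xi$, $\rho(\eta,\eta)=0$; its balls are the sets $\partial T_x$. $\nu$ is a positive Borel measure on $\partial T$ with $0<\nu(\partial T_x)<\infty$; doubling means $\nu(B_\rho(\omega,2r))\le C\nu(B_\rho(\omega,r))$ for all $\omega,r$. $m_\nu(x)=\nu(\partial T_x)$. $L^1_{\mathrm{loc}}$ means integrable on each $\partial T_x$. For $E\subset\partial T$, $b_E=\frac{1}{\nu(E)}\int_Eb\,d\nu$; $BMO$ is the space of $b\in L^1_{\mathrm{loc}}(\partial T,\nu)$ with $\|b\|_{BMO}=\sup_{x\in T}\frac{1}{\nu(\partial T_x)}\int_{\partial T_x}|b-b_{\partial T_x}|\,d\nu<\infty$. The class $\mathcal O$ consists of integral operators $\mathcal Kg(x)=\int_{\partial T}K(x,\omega)g(\omega)\,d\nu(\omega)$ whose kernel $K:T\times\partial T\to\mathbb C$ satisfies: (A1) for every $x_0\in T$, $\omega\mapsto K(x_0,\omega)$ is $\nu$-integrable and $\int_{\partial T}K(x_0,\omega)\,d\nu(\omega)=0$; (A2) $C_K:=\operatorname{ess\,sup}_{\omega\in\partial T}\sum_{x\in T}|K(x,\omega)|m_\nu(x)<\infty$;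 (A3) there is $\alpha>0$ with $|K(x,\omega)|\le m_\nu(x)^\alpha/m_\nu(x\wedge\omega)^{\alpha+1}$ for all $x\in T$, $\omega\in\partial T$. *)

theory Defs
  imports "HOL-Probability.Probability"
begin

text \<open>
A tree T with a distinguished end omega_* is encoded by its vertex type 'v and
the parent map p :: 'v => 'v, where p x is the neighbour of x on the ray [x, omega_*).
The undirected edges of T are exactly the pairs {x, p x}.  The point o is the base vertex.
A boundary point omega in dT = Omega - {omega_*} is encoded by the doubly infinite geodesic
(omega, omega_*) parametrised by level: a map g :: int => 'v with p (g n) = g (n+1) and
level (g n) = n.
\<close>

definition is_tree_with_end :: "('v \<Rightarrow> 'v) \<Rightarrow> bool" where
  "is_tree_with_end p \<longleftrightarrow>
     (\<forall>x n. n > 0 \<longrightarrow> (p ^^ n) x \<noteq> x) \<and>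
     (\<forall>x y. \<exists>j k. (p ^^ j) x = (p ^^ k) y)"

text \<open>level: l(x) = j - k whenever p^k x = p^j o (equals lim_j (j - d(x, x_j))).\<close>
definition lev :: "'v \<Rightarrow> ('v \<Rightarrow> 'v) \<Rightarrow> 'v \<Rightarrow> int" where
  "lev o' p x = (THE l. \<exists>j k. (p ^^ k) x = (p ^^ j) o' \<and> l = int j - int k)"

definition succs :: "('v \<Rightarrow> 'v) \<Rightarrow> 'v \<Rightarrow> 'v set" where
  "succs p x = {y. p y = x}"

definition vle :: "('v \<Rightarrow> 'v) \<Rightarrow> 'v \<Rightarrow> 'v \<Rightarrow> bool" where
  "vle p x y \<longleftrightarrow> (\<exists>k. (p ^^ k) x = y)"

definition bdry :: "'v \<Rightarrow> ('v \<Rightarrow> 'v) \<Rightarrow> (int \<Rightarrow> 'v) set" where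
  "bdry o' p = {g. \<forall>n. p (g n) = g (n + 1) \<and> lev o' p (g n) = n}"

definition sector :: "('v \<Rightarrow> 'v) \<Rightarrow> 'v \<Rightarrow> 'v set" where
  "sector p x = {y. vle p y x}"

definition bsector :: "'v \<Rightarrow> ('v \<Rightarrow> 'v) \<Rightarrow> 'v \<Rightarrow> (int \<Rightarrow> 'v) set" where
  "bsector o' p x = {g \<in> bdry o' p. x \<in> range g}"

definition conf_vb :: "('v \<Rightarrow> 'v) \<Rightarrow> 'v \<Rightarrow> (int \<Rightarrow> 'v) \<Rightarrow> 'v" where
  "conf_vb p x g = (p ^^ (LEAST k. (p ^^ k) x \<in> range g)) x"

definition conf_bb :: "(int \<Rightarrow> 'v) \<Rightarrow> (int \<Rightarrow> 'v) \<Rightarrow> 'v" where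
  "conf_bb g h = g (LEAST n. g n = h n)"

definition rho :: "'v \<Rightarrow> ('v \<Rightarrow> 'v) \<Rightarrow> (int \<Rightarrow> 'v) \<Rightarrow> (int \<Rightarrow> 'v) \<Rightarrow> real" where
  "rho o' p g h = (if g = h then 0 else exp (real_of_int (lev o' p (conf_bb g h))))"

definition rball :: "'v \<Rightarrow> ('v \<Rightarrow> 'v) \<Rightarrow> (int \<Rightarrow> 'v) \<Rightarrow> real \<Rightarrow> (int \<Rightarrow> 'v) set" where
  "rball o' p g r = {h \<in> bdry o' p. rho o' p g h < r}"

definition bd_open :: "'v \<Rightarrow> ('v \<Rightarrow> 'v) \<Rightarrow> (int \<Rightarrow> 'v) set set" where
  "bd_open o' p = {U. U \<subseteq> bdry o' p \<and>
      (\<forall>g\<in>U. \<exists>r>0. rball o' p g r \<subseteq> U)}"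

definition is_borel_measure_on_bdry :: "'v \<Rightarrow> ('v \<Rightarrow> 'v) \<Rightarrow> (int \<Rightarrow> 'v) measure \<Rightarrow> bool" where
  "is_borel_measure_on_bdry o' p \<nu> \<longleftrightarrow>
     sets \<nu> = sets (sigma (bdry o' p) (bd_open o' p)) \<and>
     (\<forall>x. 0 < emeasure \<nu> (bsector o' p x) \<and> emeasure \<nu> (bsector o' p x) < \<infinity>)"

definition doubling :: "'v \<Rightarrow> ('v \<Rightarrow> 'v) \<Rightarrow> (int \<Rightarrow> 'v) measure \<Rightarrow> bool" where
  "doubling o' p \<nu> \<longleftrightarrow> (\<exists>C::real. \<forall>g\<in>bdry o' p. \<forall>r.
      emeasure \<nu> (rball o' p g (2 * r)) \<le> ennreal C * emeasure \<nu> (rball o' p g r))"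

definition m_nu :: "'v \<Rightarrow> ('v \<Rightarrow> 'v) \<Rightarrow> (int \<Rightarrow> 'v) measure \<Rightarrow> 'v \<Rightarrow> real" where
  "m_nu o' p \<nu> x = measure \<nu> (bsector o' p x)"

definition L1loc :: "'v \<Rightarrow> ('v \<Rightarrow> 'v) \<Rightarrow> (int \<Rightarrow> 'v) measure \<Rightarrow> ((int \<Rightarrow> 'v) \<Rightarrow> complex) \<Rightarrow> bool" where
  "L1loc o' p \<nu> b \<longleftrightarrow> b \<in> borel_measurable \<nu> \<and> (\<forall>x. set_integrable \<nu> (bsector o' p x) b)"

definition avg :: "(int \<Rightarrow> 'v) measure \<Rightarrow> (int \<Rightarrow> 'v) set \<Rightarrow> ((int \<Rightarrow> 'v) \<Rightarrow> complex) \<Rightarrow> complex" where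
  "avg \<nu> E b = (1 / measure \<nu> E) *\<^sub>R (LINT \<omega>:E|\<nu>. b \<omega>)"

definition in_BMO :: "'v \<Rightarrow> ('v \<Rightarrow> 'v) \<Rightarrow> (int \<Rightarrow> 'v) measure \<Rightarrow> ((int \<Rightarrow> 'v) \<Rightarrow> complex) \<Rightarrow> bool" where
  "in_BMO o' p \<nu> b \<longleftrightarrow> L1loc o' p \<nu> b \<and>
     (\<exists>C. \<forall>x. (1 / measure \<nu> (bsector o' p x)) *
        (LINT \<omega>:bsector o' p x|\<nu>. cmod (b \<omega> - avg \<nu> (bsector o' p x) b)) \<le> C)"

definition A1 :: "(int \<Rightarrow> 'v) measure \<Rightarrow> ('v \<Rightarrow> (int \<Rightarrow> 'v) \<Rightarrow> complex) \<Rightarrow> bool" where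
  "A1 \<nu> K \<longleftrightarrow> (\<forall>x. integrable \<nu> (K x) \<and> (LINT \<omega>|\<nu>. K x \<omega>) = 0)"

definition C_K :: "'v \<Rightarrow> ('v \<Rightarrow> 'v) \<Rightarrow> (int \<Rightarrow> 'v) measure \<Rightarrow> ('v \<Rightarrow> (int \<Rightarrow> 'v) \<Rightarrow> complex) \<Rightarrow> ennreal" where
  "C_K o' p \<nu> K = esssup \<nu> (\<lambda>\<omega>. \<Sum>\<^sub>\<infinity>x\<in>UNIV. ennreal (cmod (K x \<omega>) * m_nu o' p \<nu> x))"

definition A2 :: "'v \<Rightarrow> ('v \<Rightarrow> 'v) \<Rightarrow> (int \<Rightarrow> 'v) measure \<Rightarrow> ('v \<Rightarrow> (int \<Rightarrow> 'v) \<Rightarrow> complex) \<Rightarrow> bool" where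
  "A2 o' p \<nu> K \<longleftrightarrow> C_K o' p \<nu> K < \<infinity>"

definition A3 :: "'v \<Rightarrow> ('v \<Rightarrow> 'v) \<Rightarrow> (int \<Rightarrow> 'v) measure \<Rightarrow> ('v \<Rightarrow> (int \<Rightarrow> 'v) \<Rightarrow> complex) \<Rightarrow> real \<Rightarrow> bool" where
  "A3 o' p \<nu> K \<alpha> \<longleftrightarrow> \<alpha> > 0 \<and> (\<forall>x. \<forall>\<omega>\<in>bdry o' p.
      cmod (K x \<omega>) \<le> m_nu o' p \<nu> x powr \<alpha> / m_nu o' p \<nu> (conf_vb p x \<omega>) powr (\<alpha> + 1))"

definition in_class_O :: "'v \<Rightarrow> ('v \<Rightarrow> 'v) \<Rightarrow> (int \<Rightarrow> 'v) measure \<Rightarrow> ('v \<Rightarrow> (int \<Rightarrow> 'v) \<Rightarrow> complex) \<Rightarrow> bool" where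
  "in_class_O o' p \<nu> K \<longleftrightarrow> A1 \<nu> K \<and> A2 o' p \<nu> K \<and> (\<exists>\<alpha>. A3 o' p \<nu> K \<alpha>)"

definition Kop :: "(int \<Rightarrow> 'v) measure \<Rightarrow> ('v \<Rightarrow> (int \<Rightarrow> 'v) \<Rightarrow> complex) \<Rightarrow> ((int \<Rightarrow> 'v) \<Rightarrow> complex) \<Rightarrow> 'v \<Rightarrow> complex" where
  "Kop \<nu> K b x = (LINT \<omega>|\<nu>. K x \<omega> * b \<omega>)"

end

theory Submission
  imports Defs
begin

text \<open>
  Levels and sectors of the tree are tied to the measure by two facts: doubling gives
  m(p x) \<le> D m(x), and since every vertex has a sibling, m(x) \<le> \<delta> m(p x) with
  \<delta> = 1 - 1/D < 1, so masses decay geometrically down the tree.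

  If b \<in> BMO, the averages of b over BS x and BS (p x) differ by at most D \<parallel>b\<parallel>, hence
  b deviates from its average over BS v by O(k \<parallel>b\<parallel>) on BS (p^k v). Since K annihilates
  constants, Kb(x) = \<integral> K(x,\<omega>)(b(\<omega>) - b_v) d\<nu>. Boundary points in BS v are handled by
  (A2); for \<omega> outside BS v all x \<le> v share the confluent with \<omega>, and (A3) together with
  the geometric decay sums to a constant times m(v).

  Conversely, let s be the phase of b - b_v. The kernel supported at the single vertex v
  and equal to (s - s_v)/(2 m(v)) on BS v belongs to class O with C_K \<le> 1 and \<alpha> = 1,
  and Kb(v) is half the mean oscillation of b over BS v, so (ii) bounds that oscillation
  by 2 f(1,1).\<close>

lemma funpow_apply_add: "(f ^^ m) ((f ^^ n) x) = (f ^^ (m + n)) x"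
  by (simp add: funpow_add)

lemma ennreal_sum_le_suminf: "finite F \<Longrightarrow> sum f F \<le> (\<Sum>k. f k :: ennreal)"
  using sum_le_suminf[OF summableI] by simp

lemma ennreal_sum_le_infsum: "finite F \<Longrightarrow> F \<subseteq> A \<Longrightarrow> sum (f :: _ \<Rightarrow> ennreal) F \<le> infsum f A"
  by (simp add: nonneg_infsum_complete) (rule SUP_upper, auto)

lemma suminf_ennreal_Suc_geometric:
  fixes r :: real assumes "0 \<le> r" "r < 1"
  shows "(\<Sum>k. ennreal (real (Suc k) * r ^ k)) = ennreal ((1 / (1 - r)) ^ 2)"
proof -
  have "(\<lambda>k. real (Suc k) * r ^ k) sums (1 / (1 - r) ^ 2)"
    using geometric_deriv_sums[of r] assms by simp
  then show ?thesis
    using assms by (subst suminf_ennreal2) (auto simp: sums_iff power_divide)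
qed

lemma borel_measurable_kernel: "A1 M K \<Longrightarrow> K x \<in> borel_measurable M"
  unfolding A1_def by (blast intro: borel_measurable_integrable)

lemma cnj_sgn_mult: "cnj (sgn z) * z = complex_of_real (cmod z)"
proof (cases "z = 0")
  case False
  have "cnj (sgn z) * z = (z * cnj z) / complex_of_real (cmod z)"
    by (simp add: sgn_div_norm divide_inverse scaleR_conv_of_real mult_ac)
  also have "\<dots> = complex_of_real (cmod z)"
    using False by (simp add: complex_norm_square[symmetric] power2_eq_square)
  finally show ?thesis .
qed simp

section \<open>Trees with a distinguished end\<close>

locale end_tree =
  fixes o' :: 'v and p :: "'v \<Rightarrow> 'v"
  assumes tree: "is_tree_with_end p"
begin

abbreviation "L \<equiv> lev o' p"
abbreviation "BD \<equiv> bdry o' p"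
abbreviation "BS \<equiv> bsector o' p"

lemma funpow_neq_self: "n > 0 \<Longrightarrow> (p ^^ n) x \<noteq> x"
  using tree unfolding is_tree_with_end_def by blast

lemma common_ancestor: "\<exists>j k. (p ^^ j) x = (p ^^ k) y"
  using tree unfolding is_tree_with_end_def by blast

lemma funpow_eq_imp_eq: assumes "(p ^^ a) y = (p ^^ c) y" shows "a = c"
proof -
  have False if "i < j" "(p ^^ i) y = (p ^^ j) y" for i j
  proof -
    have "(p ^^ (j - i)) ((p ^^ i) y) = (p ^^ j) y"
      using that(1) by (simp add: funpow_apply_add)
    then show False using that funpow_neq_self[of "j - i" "(p ^^ i) y"] by simp
  qed
  then show ?thesis using assms by (metis linorder_neqE_nat)
qed

lemma lev_eq: assumes "(p ^^ k) x = (p ^^ j) o'" shows "L x = int j - int k"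
  unfolding lev_def
proof (rule the_equality)
  show "\<exists>j' k'. (p ^^ k') x = (p ^^ j') o' \<and> int j - int k = int j' - int k'"
    using assms by blast
  fix l assume "\<exists>j' k'. (p ^^ k') x = (p ^^ j') o' \<and> l = int j' - int k'"
  then obtain j' k' where jk': "(p ^^ k') x = (p ^^ j') o'" "l = int j' - int k'" by blast
  have "(p ^^ (k' + j)) o' = (p ^^ k') ((p ^^ k) x)"
    by (simp only: assms funpow_apply_add)
  also have "\<dots> = (p ^^ k) ((p ^^ k') x)"
    by (simp only: funpow_apply_add add.commute)
  also have "\<dots> = (p ^^ (k + j')) o'"
    by (simp only: jk'(1) funpow_apply_add)
  finally have "k' + j = k + j'" by (rule funpow_eq_imp_eq)
  then show "l = int j - int k" using jk'(2) by linarith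
qed

lemma lev_funpow: "L ((p ^^ n) x) = L x + int n"
proof -
  obtain j k where h: "(p ^^ j) x = (p ^^ k) o'" using common_ancestor by blast
  have "(p ^^ j) ((p ^^ n) x) = (p ^^ n) ((p ^^ j) x)"
    by (simp only: funpow_apply_add add.commute)
  also have "\<dots> = (p ^^ (n + k)) o'"
    by (simp only: h funpow_apply_add)
  finally show ?thesis using lev_eq h by simp
qed

lemma lev_parent: "L (p x) = L x + 1"
  using lev_funpow[of 1 x] by simp

lemma bdry_parent: "g \<in> BD \<Longrightarrow> p (g n) = g (n + 1)"
  unfolding bdry_def by blast

lemma bdry_lev: "g \<in> BD \<Longrightarrow> L (g n) = n"
  unfolding bdry_def by blast

lemma bdry_funpow: assumes "g \<in> BD" shows "(p ^^ k) (g n) = g (n + int k)"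
proof (induction k)
  case (Suc k)
  have "(p ^^ Suc k) (g n) = g (n + int k + 1)" using Suc assms by (simp add: bdry_parent)
  also have "n + int k + 1 = n + int (Suc k)" by simp
  finally show ?case .
qed simp

lemma bsector_iff: "g \<in> BS x \<longleftrightarrow> g \<in> BD \<and> g (L x) = x"
proof -
  have "x \<in> range g \<longleftrightarrow> g (L x) = x" if "g \<in> BD"
    using bdry_lev[OF that] by (metis rangeE rangeI)
  then show ?thesis unfolding bsector_def by auto
qed

lemma bsector_subset_bdry: "BS x \<subseteq> BD"
  unfolding bsector_def by auto

lemma bsector_subset_parent: "BS x \<subseteq> BS (p x)"
  by (auto simp: bsector_iff lev_parent bdry_parent[symmetric])

lemma bsector_subset_funpow: "BS x \<subseteq> BS ((p ^^ k) x)"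
  by (induction k) (auto dest: bsector_subset_parent[THEN subsetD])

lemma bsector_siblings_disjoint:
  assumes "p y = p x" "y \<noteq> x" shows "BS x \<inter> BS y = {}"
  using assms lev_parent[of x] lev_parent[of y] by (auto simp: bsector_iff)

lemma mem_sector_iff: "x \<in> sector p v \<longleftrightarrow> (\<exists>k. (p ^^ k) x = v)"
  unfolding sector_def vle_def by simp

lemma bdry_agree_above:
  assumes "g \<in> BD" "h \<in> BD" "g n = h n" "n \<le> k" shows "g k = h k"
  using bdry_funpow[OF assms(1), of "nat (k - n)" n] bdry_funpow[OF assms(2), of "nat (k - n)" n] assms
  by simp

lemma bdry_agree_somewhere: assumes "g \<in> BD" "h \<in> BD" shows "\<exists>n. g n = h n"
proof -
  obtain j k where "(p ^^ j) (g 0) = (p ^^ k) (h 0)" using common_ancestor by blast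
  then have e: "g (int j) = h (int k)" using bdry_funpow assms by simp
  then have "int j = int k" using bdry_lev assms by metis
  then show ?thesis using e by auto
qed

lemma bdry_first_agreement:
  assumes "g \<in> BD" "h \<in> BD" "g \<noteq> h"
  obtains N where "g N = h N" "\<And>n. g n = h n \<Longrightarrow> N \<le> n" "(LEAST n. g n = h n) = N"
proof -
  obtain m0 where m0: "g m0 \<noteq> h m0" using assms by auto
  have gt: "m0 < n" if "g n = h n" for n
    using bdry_agree_above[OF assms(1,2) that, of m0] m0 by force
  define P where "P t \<longleftrightarrow> g (m0 + 1 + int t) = h (m0 + 1 + int t)" for t
  obtain j where "g j = h j" using bdry_agree_somewhere assms by blast
  then have "P (nat (j - m0 - 1))" unfolding P_def using gt by simp
  then have PL: "P (LEAST t. P t)" by (rule LeastI)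
  define N where "N = m0 + 1 + int (LEAST t. P t)"
  have agree: "g N = h N" using PL unfolding N_def P_def by simp
  have least: "N \<le> n" if "g n = h n" for n
  proof -
    have "P (nat (n - m0 - 1))" unfolding P_def using gt[OF that] that by simp
    then have "(LEAST t. P t) \<le> nat (n - m0 - 1)" by (rule Least_le)
    then show ?thesis unfolding N_def using gt[OF that] by linarith
  qed
  have "(LEAST n. g n = h n) = N" by (rule Least_equality) (use agree least in auto)
  then show ?thesis using that agree least by blast
qed

lemma rho_eq_exp_first_agreement:
  assumes "g \<in> BD" "h \<in> BD" "g \<noteq> h" "(LEAST n. g n = h n) = N"
  shows "rho o' p g h = exp (real_of_int N)"
  using assms bdry_lev[OF assms(1)] unfolding rho_def conf_bb_def by simp

lemma rball_eq_bsector: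
  assumes g: "g \<in> BD" and r: "exp (real_of_int l) < r" "r \<le> exp (real_of_int l + 1)"
  shows "rball o' p g r = BS (g l)"
proof (intro set_eqI iffI)
  fix h assume "h \<in> rball o' p g r"
  then have h: "h \<in> BD" "rho o' p g h < r" unfolding rball_def by auto
  show "h \<in> BS (g l)"
  proof (cases "g = h")
    case True then show ?thesis using g by (simp add: bsector_iff bdry_lev)
  next
    case False
    obtain N where N: "g N = h N" "(LEAST n. g n = h n) = N"
      using bdry_first_agreement[OF g h(1) False] by blast
    have "exp (real_of_int N) < exp (real_of_int l + 1)"
      using rho_eq_exp_first_agreement[OF g h(1) False N(2)] h r by linarith
    then have "g l = h l" using bdry_agree_above[OF g h(1) N(1)] by simp
    then show ?thesis using h by (simp add: bsector_iff bdry_lev[OF g] bdry_lev[OF h(1)])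
  qed
next
  fix h assume "h \<in> BS (g l)"
  then have h: "h \<in> BD" "h l = g l" by (simp_all add: bsector_iff bdry_lev[OF g])
  show "h \<in> rball o' p g r"
  proof (cases "g = h")
    case True then show ?thesis using g r unfolding rball_def rho_def
      by (auto intro: less_trans[OF exp_gt_zero])
  next
    case False
    obtain N where N: "\<And>n. g n = h n \<Longrightarrow> N \<le> n" "(LEAST n. g n = h n) = N"
      using bdry_first_agreement[OF g h(1) False] by blast
    have "rho o' p g h \<le> exp l"
      using rho_eq_exp_first_agreement[OF g h(1) False N(2)] N(1)[of l] h by simp
    then show ?thesis using h r unfolding rball_def by simp
  qed
qed

lemma rball_eq_bsector_of_mem: "g \<in> BS x \<Longrightarrow> rball o' p g (exp (real_of_int (L x) + 1)) = BS x"
  using rball_eq_bsector[of g "L x"] by (simp add: bsector_iff)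

lemma bsector_open: "BS x \<in> bd_open o' p"
  unfolding bd_open_def using rball_eq_bsector_of_mem bsector_subset_bdry
  by (auto intro!: exI[of _ "exp (real_of_int (L x) + 1)"])

definition conf_height :: "'v \<Rightarrow> (int \<Rightarrow> 'v) \<Rightarrow> nat" where
  "conf_height x g = (LEAST k. (p ^^ k) x \<in> range g)"

lemma conf_vb_eq: "conf_vb p x g = (p ^^ conf_height x g) x"
  unfolding conf_vb_def conf_height_def ..

lemma mem_bsector_funpow_iff:
  assumes "g \<in> BD" shows "g \<in> BS ((p ^^ k) x) \<longleftrightarrow> conf_height x g \<le> k"
proof
  assume "g \<in> BS ((p ^^ k) x)"
  then show "conf_height x g \<le> k"
    unfolding conf_height_def bsector_def by (auto intro: Least_le)
next
  have "\<exists>k. (p ^^ k) x \<in> range g"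
    using common_ancestor[of x "g 0"] bdry_funpow[OF assms] by (metis rangeI)
  then have "(p ^^ conf_height x g) x \<in> range g"
    unfolding conf_height_def by (rule LeastI_ex)
  then have "g \<in> BS ((p ^^ conf_height x g) x)"
    unfolding bsector_def using assms by simp
  moreover assume "conf_height x g \<le> k"
  ultimately show "g \<in> BS ((p ^^ k) x)"
    using bsector_subset_funpow[of "(p ^^ conf_height x g) x" "k - conf_height x g"]
    by (auto simp: funpow_apply_add)
qed

lemma conf_vb_self: "g \<in> BS x \<Longrightarrow> conf_vb p x g = x"
  using mem_bsector_funpow_iff[of g 0 x] bsector_subset_bdry by (force simp: conf_vb_eq)

lemma conf_vb_outside:
  assumes g: "g \<in> BD" and v: "(p ^^ j) x = v" and out: "g \<notin> BS v"
  shows "conf_vb p x g = conf_vb p v g"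
proof -
  let ?k = "conf_height x g"
  have j: "j < ?k" using mem_bsector_funpow_iff[OF g, of j x] v out by simp
  have "g \<in> BS ((p ^^ conf_height v g) v)" by (simp add: mem_bsector_funpow_iff[OF g])
  then have "?k \<le> conf_height v g + j"
    unfolding v[symmetric] funpow_apply_add mem_bsector_funpow_iff[OF g] .
  moreover have "(p ^^ ?k) x = (p ^^ (?k - j)) v"
    using j v by (metis funpow_add le_add_diff_inverse2 less_imp_le comp_apply)
  then have "conf_height v g \<le> ?k - j"
    using mem_bsector_funpow_iff[OF g, of ?k x] mem_bsector_funpow_iff[OF g] by simp
  ultimately have "?k = conf_height v g + j" using j by linarith
  then show ?thesis using v by (simp add: conf_vb_eq funpow_add)
qed

end

section \<open>Doubling measures on the boundary\<close>

locale tree_boundary_measure = end_tree o' p for o' :: 'v and p +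
  fixes \<nu> :: "(int \<Rightarrow> 'v) measure"
  assumes two_succ: "\<forall>x. \<exists>y z. y \<in> succs p x \<and> z \<in> succs p x \<and> y \<noteq> z"
    and borel: "is_borel_measure_on_bdry o' p \<nu>"
    and dbl: "doubling o' p \<nu>"
begin

abbreviation "m \<equiv> m_nu o' p \<nu>"

lemma space_nu: "space \<nu> = BD"
proof -
  have "bd_open o' p \<subseteq> Pow BD" unfolding bd_open_def by auto
  then show ?thesis
    using borel unfolding is_borel_measure_on_bdry_def
    by (metis sets_eq_imp_space_eq space_measure_of_conv)
qed

lemma sets_bsector [measurable]: "BS x \<in> sets \<nu>"
proof -
  have "bd_open o' p \<subseteq> Pow BD" unfolding bd_open_def by auto
  then show ?thesis
    using borel bsector_open unfolding is_borel_measure_on_bdry_def by auto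
qed

lemma emeasure_bsector: "emeasure \<nu> (BS x) = ennreal (m x)"
  using borel unfolding is_borel_measure_on_bdry_def m_nu_def
  by (simp add: emeasure_eq_ennreal_measure less_top)

lemma m_nu_pos: "0 < m x"
  using borel emeasure_bsector unfolding is_borel_measure_on_bdry_def
  by (metis ennreal_less_zero_iff)

lemma integrable_indicator_bsector: "integrable \<nu> (\<lambda>\<omega>. indicator (BS x) \<omega> :: real)"
  using emeasure_bsector by (intro integrable_real_indicator) auto

lemma integral_indicator_bsector: "integral\<^sup>L \<nu> (\<lambda>\<omega>. indicator (BS x) \<omega> :: real) = m x"
  using space_nu bsector_subset_bdry unfolding m_nu_def by (simp add: Int_absorb2)

lemma m_nu_parent_le_const: obtains C :: real where "\<And>x. m (p x) \<le> C * m x"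
proof -
  obtain C :: real where C: "\<forall>g\<in>BD. \<forall>r. emeasure \<nu> (rball o' p g (2 * r)) \<le> ennreal C * emeasure \<nu> (rball o' p g r)"
    using dbl unfolding doubling_def by blast
  have "m (p x) \<le> max C 0 * m x" for x
  proof -
    have "BS x \<noteq> {}"
      using borel unfolding is_borel_measure_on_bdry_def by (metis emeasure_empty less_irrefl)
    then obtain g where g: "g \<in> BS x" by blast
    define r where "r = exp (real_of_int (L x) + 1)"
    \<comment> \<open>The ball of radius r around g is BS x, the ball of radius 2 r is BS (p x), as 2 \<le> e.\<close>
    have "rball o' p g r = BS x" using rball_eq_bsector_of_mem[OF g] unfolding r_def .
    moreover have "rball o' p g (2 * r) = BS (p x)"
    proof -
      have "g \<in> BS (p x)" using g bsector_subset_parent by blast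
      moreover have "2 * r \<le> exp (real_of_int (L (p x)) + 1)"
      proof -
        have "exp (real_of_int (L (p x)) + 1) = exp 1 * r"
          unfolding r_def lev_parent by (simp add: mult_exp_exp)
        then show ?thesis
          using exp_ge_add_one_self[of 1] by (simp add: r_def mult_right_mono)
      qed
      moreover have "exp (real_of_int (L (p x))) < 2 * r"
        unfolding r_def lev_parent by simp
      ultimately show ?thesis
        using rball_eq_bsector[of g "L (p x)" "2 * r"] by (simp add: bsector_iff)
    qed
    ultimately have "ennreal (m (p x)) \<le> ennreal C * ennreal (m x)"
      using C g bsector_subset_bdry by (metis emeasure_bsector subsetD)
    then show ?thesis
      using m_nu_pos[of x] m_nu_pos[of "p x"]
      by (cases "C \<ge> 0") (auto simp: ennreal_mult[symmetric] ennreal_neg)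
  qed
  then show ?thesis using that by blast
qed

lemma m_nu_siblings_le: assumes "p y = p x" "y \<noteq> x" shows "m x + m y \<le> m (p x)"
proof -
  have "ennreal (m x) + ennreal (m y) = emeasure \<nu> (BS x \<union> BS y)"
    using bsector_siblings_disjoint[OF assms] by (simp add: plus_emeasure flip: emeasure_bsector)
  also have "\<dots> \<le> ennreal (m (p x))"
    using bsector_subset_parent[of x] bsector_subset_parent[of y] assms
    by (metis emeasure_bsector emeasure_mono sets_bsector Un_least)
  finally show ?thesis using m_nu_pos[of x] m_nu_pos[of y] m_nu_pos[of "p x"]
    by (simp add: ennreal_plus[symmetric] del: ennreal_plus)
qed

lemma exists_sibling: "\<exists>y. p y = p x \<and> y \<noteq> x"
  using two_succ unfolding succs_def by (metis mem_Collect_eq)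

text \<open>Having a sibling forces the constant of the doubling step to exceed 1.\<close>

lemma m_nu_parent_le_const_gt_1: "\<exists>C>1. \<forall>x. m (p x) \<le> C * m x"
proof -
  obtain C where C: "\<And>x. m (p x) \<le> C * m x" using m_nu_parent_le_const by blast
  obtain y where y: "p y = p o'" "y \<noteq> o'" using exists_sibling by blast
  have "m o' < C * m o'" using m_nu_siblings_le[OF y] m_nu_pos[of y] C[of o'] by simp
  then have "C > 1" using m_nu_pos[of o'] by simp
  then show ?thesis using C by blast
qed

definition dbl_ratio :: real where
  "dbl_ratio = (SOME C. C > 1 \<and> (\<forall>x. m (p x) \<le> C * m x))"

lemma dbl_ratio_gt_1: "dbl_ratio > 1" and m_nu_parent_le: "m (p x) \<le> dbl_ratio * m x"
  using someI_ex[OF m_nu_parent_le_const_gt_1] unfolding dbl_ratio_def[symmetric] by auto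

definition decay :: real where "decay = 1 - 1 / dbl_ratio"

lemma decay_pos: "0 < decay" and decay_less_1: "decay < 1"
  unfolding decay_def using dbl_ratio_gt_1 by auto

text \<open>A vertex carries at most the fraction decay of the mass of its parent, because its
  sibling carries at least the fraction 1 / dbl_ratio.\<close>

lemma m_nu_le_decay: "m x \<le> decay * m (p x)"
proof -
  obtain y where y: "p y = p x" "y \<noteq> x" using exists_sibling by blast
  have "m (p x) / dbl_ratio \<le> m y"
    using m_nu_parent_le[of y] y dbl_ratio_gt_1 by (simp add: field_simps)
  then show ?thesis using m_nu_siblings_le[OF y] unfolding decay_def by (simp add: algebra_simps)
qed

lemma m_nu_le_decay_funpow: "m x \<le> decay ^ k * m ((p ^^ k) x)"
proof (induction k)
  case (Suc k)
  have "decay ^ k * m ((p ^^ k) x) \<le> decay ^ k * (decay * m ((p ^^ Suc k) x))"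
    using m_nu_le_decay[of "(p ^^ k) x"] decay_pos by (intro mult_left_mono) auto
  then show ?case using Suc by (simp add: mult_ac)
qed simp

lemma m_nu_powr_le_decay_funpow:
  assumes "\<alpha> > 0" shows "m x powr \<alpha> \<le> (decay powr \<alpha>) ^ k * m ((p ^^ k) x) powr \<alpha>"
proof -
  have "m x powr \<alpha> \<le> (decay ^ k * m ((p ^^ k) x)) powr \<alpha>"
    using m_nu_le_decay_funpow m_nu_pos[of x] assms by (intro powr_mono2) auto
  also have "\<dots> = (decay powr \<alpha>) ^ k * m ((p ^^ k) x) powr \<alpha>"
    using decay_pos m_nu_pos[of "(p ^^ k) x"]
    by (simp add: powr_mult powr_realpow[symmetric] powr_powr mult.commute)
  finally show ?thesis .
qed

lemma decay_powr_pos: "0 < decay powr \<alpha>"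
  using decay_pos by simp

lemma decay_powr_less_1: "\<alpha> > 0 \<Longrightarrow> decay powr \<alpha> < 1"
  using decay_pos decay_less_1 powr_less_mono2[of \<alpha> decay 1] by simp

definition geom_sum :: "real \<Rightarrow> real" where "geom_sum \<alpha> = 1 / (1 - decay powr \<alpha>)"

lemma geom_sum_pos: "\<alpha> > 0 \<Longrightarrow> geom_sum \<alpha> > 0"
  unfolding geom_sum_def using decay_powr_less_1 by simp

lemma sum_decay_powr_le_geom_sum:
  assumes "\<alpha> > 0" "finite J" shows "(\<Sum>j\<in>J. (decay powr \<alpha>) ^ j) \<le> geom_sum \<alpha>"
proof -
  have s: "(\<lambda>j. (decay powr \<alpha>) ^ j) sums geom_sum \<alpha>"
    unfolding geom_sum_def using decay_powr_pos decay_powr_less_1[OF assms(1)]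
    by (intro geometric_sums) simp
  then show ?thesis
    using sum_le_suminf[OF sums_summable[OF s] assms(2)] decay_powr_pos
    by (simp add: sums_unique[OF s, symmetric])
qed

text \<open>
  A boundary point lies in at most one sector per level, so the sectors of T_v containing it
  contribute a geometric series to the weighted sum below.\<close>

lemma sum_powr_indicator_le:
  assumes a: "\<alpha> > 0" and F: "finite F" "F \<subseteq> sector p v"
  shows "(\<Sum>x\<in>F. m x powr \<alpha> * indicator (BS x) g) \<le> geom_sum \<alpha> * m v powr \<alpha> * indicator (BS v) g"
proof (cases "g \<in> BS v")
  case False
  have "g \<notin> BS x" if x: "x \<in> F" for x
  proof -
    obtain k where "(p ^^ k) x = v" using F x mem_sector_iff by blast
    then show ?thesis using False bsector_subset_funpow[of x k] by blast
  qed
  then show ?thesis using False by simp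
next
  case True
  define jj where "jj x = nat (L v - L x)" for x
  have chain: "(p ^^ jj x) x = v" and lev_jj: "L x = L v - int (jj x)" if x: "x \<in> F" for x
  proof -
    obtain k where k: "(p ^^ k) x = v" using F x mem_sector_iff by blast
    then have "jj x = k" using lev_funpow[of k x] unfolding jj_def by simp
    then show "(p ^^ jj x) x = v" "L x = L v - int (jj x)" using k lev_funpow[of k x] by simp_all
  qed
  let ?F = "{x\<in>F. g \<in> BS x}"
  have "inj_on jj ?F"
  proof (rule inj_onI)
    fix x y assume xy: "x \<in> ?F" "y \<in> ?F" "jj x = jj y"
    then have "L x = L y" using lev_jj by simp
    then show "x = y" using xy(1,2) by (auto simp: bsector_iff)
  qed
  have "(\<Sum>x\<in>F. m x powr \<alpha> * indicator (BS x) g) = (\<Sum>x\<in>?F. m x powr \<alpha>)"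
    using F(1) by (simp add: sum.inter_filter[symmetric] indicator_def Int_def)
  also have "\<dots> \<le> (\<Sum>x\<in>?F. (decay powr \<alpha>) ^ jj x * m v powr \<alpha>)"
    using m_nu_powr_le_decay_funpow[OF a] chain by (intro sum_mono) force
  also have "\<dots> = (\<Sum>j\<in>jj ` ?F. (decay powr \<alpha>) ^ j) * m v powr \<alpha>"
    using \<open>inj_on jj ?F\<close> by (simp add: sum.reindex sum_distrib_right)
  also have "\<dots> \<le> geom_sum \<alpha> * m v powr \<alpha>"
    using sum_decay_powr_le_geom_sum[OF a] F(1) by (intro mult_right_mono) auto
  finally show ?thesis using True by simp
qed

lemma sum_powr_le_geom_sum:
  assumes a: "\<alpha> > 0" and F: "finite F" "F \<subseteq> sector p v"
  shows "(\<Sum>x\<in>F. m x powr (\<alpha> + 1)) \<le> geom_sum \<alpha> * m v powr (\<alpha> + 1)"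
proof -
  have powr_succ: "m x powr (\<alpha> + 1) = integral\<^sup>L \<nu> (\<lambda>g. m x powr \<alpha> * indicator (BS x) g)" for x
    using m_nu_pos[of x] by (simp add: powr_add m_nu_def)
  have "(\<Sum>x\<in>F. m x powr (\<alpha> + 1)) = integral\<^sup>L \<nu> (\<lambda>g. \<Sum>x\<in>F. m x powr \<alpha> * indicator (BS x) g)"
    unfolding powr_succ using integrable_indicator_bsector
    by (intro Bochner_Integration.integral_sum[symmetric]) auto
  also have "\<dots> \<le> integral\<^sup>L \<nu> (\<lambda>g. geom_sum \<alpha> * m v powr \<alpha> * indicator (BS v) g)"
    using integrable_indicator_bsector sum_powr_indicator_le[OF a F] by (intro integral_mono) auto
  finally show ?thesis unfolding powr_succ by (simp add: mult.assoc)
qed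

definition kernel_weight :: "real \<Rightarrow> 'v \<Rightarrow> nat \<Rightarrow> real" where
  "kernel_weight \<alpha> x k = m x powr \<alpha> / m ((p ^^ k) x) powr (\<alpha> + 1)"

lemma kernel_weight_nonneg: "0 \<le> kernel_weight \<alpha> x k"
  unfolding kernel_weight_def by simp

lemma norm_kernel_le_weight:
  "A3 o' p \<nu> K \<alpha> \<Longrightarrow> \<omega> \<in> BD \<Longrightarrow> cmod (K x \<omega>) \<le> kernel_weight \<alpha> x (conf_height x \<omega>)"
  unfolding A3_def kernel_weight_def conf_vb_eq by blast

lemma kernel_weight_mass_le:
  assumes "\<alpha> > 0" shows "kernel_weight \<alpha> v k * m ((p ^^ k) v) \<le> (decay powr \<alpha>) ^ k"
proof -
  let ?w = "(p ^^ k) v"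
  have "kernel_weight \<alpha> v k * m ?w = m v powr \<alpha> / m ?w powr \<alpha>"
    using m_nu_pos[of ?w] unfolding kernel_weight_def by (simp add: powr_add)
  also have "\<dots> \<le> (decay powr \<alpha>) ^ k"
    using m_nu_powr_le_decay_funpow[OF assms, of v k] m_nu_pos[of ?w]
    by (simp add: divide_le_eq)
  finally show ?thesis .
qed

text \<open>
  The bound kernel_weight at the confluent height need not be measurable in the boundary
  point; the series below dominates it and is measurable.\<close>

definition kernel_majorant :: "real \<Rightarrow> 'v \<Rightarrow> (int \<Rightarrow> 'v) \<Rightarrow> ennreal" where
  "kernel_majorant \<alpha> v \<omega> = (\<Sum>k. ennreal (kernel_weight \<alpha> v k) * indicator (BS ((p ^^ k) v)) \<omega>)"

lemma borel_measurable_kernel_majorant [measurable]: "kernel_majorant \<alpha> v \<in> borel_measurable \<nu>"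
  unfolding kernel_majorant_def by measurable

lemma kernel_weight_le_majorant:
  assumes "\<omega> \<in> BD" shows "ennreal (kernel_weight \<alpha> v (conf_height v \<omega>)) \<le> kernel_majorant \<alpha> v \<omega>"
proof -
  have "\<omega> \<in> BS ((p ^^ conf_height v \<omega>) v)" using assms mem_bsector_funpow_iff by blast
  then show ?thesis unfolding kernel_majorant_def
    using ennreal_sum_le_suminf[of "{conf_height v \<omega>}"
        "\<lambda>k. ennreal (kernel_weight \<alpha> v k) * indicator (BS ((p ^^ k) v)) \<omega>"] by simp
qed

text \<open>
  All x \<in> T_v have the same confluent with a boundary point outside BS v, namely its
  confluent with v, so (A3) reduces the kernel sum to the geometric bound on sector masses.\<close>

lemma sum_kernel_outside_bsector:
  assumes K: "A3 o' p \<nu> K \<alpha>" and \<omega>: "\<omega> \<in> BD" "\<omega> \<notin> BS v"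
    and F: "finite F" "F \<subseteq> sector p v"
  shows "(\<Sum>x\<in>F. cmod (K x \<omega>) * m x) \<le> geom_sum \<alpha> * m v * kernel_weight \<alpha> v (conf_height v \<omega>)"
proof -
  have a: "\<alpha> > 0" using K unfolding A3_def by blast
  define w where "w = conf_vb p v \<omega>"
  have "cmod (K x \<omega>) * m x \<le> m x powr (\<alpha> + 1) / m w powr (\<alpha> + 1)" if x: "x \<in> F" for x
  proof -
    obtain j where "(p ^^ j) x = v" using F x mem_sector_iff by blast
    then have "conf_vb p x \<omega> = w" unfolding w_def using conf_vb_outside \<omega> by blast
    then have "cmod (K x \<omega>) \<le> m x powr \<alpha> / m w powr (\<alpha> + 1)"
      using K \<omega>(1) unfolding A3_def by metis
    moreover have "m x powr (\<alpha> + 1) / m w powr (\<alpha> + 1) = m x powr \<alpha> / m w powr (\<alpha> + 1) * m x"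
      using m_nu_pos[of x] by (simp add: powr_add)
    ultimately show ?thesis
      using m_nu_pos[of x] by (metis less_imp_le mult_right_mono)
  qed
  then have "(\<Sum>x\<in>F. cmod (K x \<omega>) * m x) \<le> (\<Sum>x\<in>F. m x powr (\<alpha> + 1)) / m w powr (\<alpha> + 1)"
    by (simp add: sum_divide_distrib sum_mono)
  also have "\<dots> \<le> geom_sum \<alpha> * m v powr (\<alpha> + 1) / m w powr (\<alpha> + 1)"
    using sum_powr_le_geom_sum[OF a F] by (simp add: divide_right_mono)
  also have "\<dots> = geom_sum \<alpha> * m v * kernel_weight \<alpha> v (conf_height v \<omega>)"
    using m_nu_pos[of v] unfolding w_def kernel_weight_def conf_vb_eq by (simp add: powr_add)
  finally show ?thesis .
qed

lemma sum_kernel_le: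
  assumes K: "A3 o' p \<nu> K \<alpha>" and \<omega>: "\<omega> \<in> BD" and F: "finite F" "F \<subseteq> sector p v"
  shows "(\<Sum>x\<in>F. ennreal (cmod (K x \<omega>) * m x))
    \<le> (\<Sum>\<^sub>\<infinity>x\<in>UNIV. ennreal (cmod (K x \<omega>) * m x)) * indicator (BS v) \<omega>
       + ennreal (geom_sum \<alpha> * m v) * kernel_majorant \<alpha> v \<omega>"
proof (cases "\<omega> \<in> BS v")
  case True
  have "(\<Sum>x\<in>F. ennreal (cmod (K x \<omega>) * m x)) \<le> (\<Sum>\<^sub>\<infinity>x\<in>UNIV. ennreal (cmod (K x \<omega>) * m x))"
    using F(1) by (intro ennreal_sum_le_infsum) auto
  then show ?thesis using True by (simp add: add_increasing2)
next
  case False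
  have "(\<Sum>x\<in>F. ennreal (cmod (K x \<omega>) * m x)) = ennreal (\<Sum>x\<in>F. cmod (K x \<omega>) * m x)"
    using m_nu_pos by (simp add: sum_ennreal less_imp_le)
  also have "\<dots> \<le> ennreal (geom_sum \<alpha> * m v * kernel_weight \<alpha> v (conf_height v \<omega>))"
    using sum_kernel_outside_bsector[OF K \<omega> False F] by (rule ennreal_leI)
  also have "\<dots> = ennreal (geom_sum \<alpha> * m v) * ennreal (kernel_weight \<alpha> v (conf_height v \<omega>))"
    using kernel_weight_nonneg by (simp add: ennreal_mult'')
  also have "\<dots> \<le> ennreal (geom_sum \<alpha> * m v) * kernel_majorant \<alpha> v \<omega>"
    using kernel_weight_le_majorant[OF \<omega>] by (rule mult_left_mono) simp
  finally show ?thesis using False by simp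
qed

lemma AE_sum_kernel_le:
  assumes O: "in_class_O o' p \<nu> K" and K: "A3 o' p \<nu> K \<alpha>"
  shows "AE \<omega> in \<nu>. \<forall>F. finite F \<and> F \<subseteq> sector p v \<longrightarrow>
    (\<Sum>x\<in>F. ennreal (cmod (K x \<omega>) * m x))
      \<le> ennreal (enn2real (C_K o' p \<nu> K)) * indicator (BS v) \<omega>
         + ennreal (geom_sum \<alpha> * m v) * kernel_majorant \<alpha> v \<omega>"
  using esssup_AE[where M = \<nu> and f = "\<lambda>\<omega>. \<Sum>\<^sub>\<infinity>x\<in>UNIV. ennreal (cmod (K x \<omega>) * m x)"] AE_space
proof eventually_elim
  case (elim \<omega>)
  have "C_K o' p \<nu> K = ennreal (enn2real (C_K o' p \<nu> K))"
    using O unfolding in_class_O_def A2_def by (simp add: less_top)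
  then have "(\<Sum>\<^sub>\<infinity>x\<in>UNIV. ennreal (cmod (K x \<omega>) * m x)) * indicator (BS v) \<omega>
      \<le> ennreal (enn2real (C_K o' p \<nu> K)) * indicator (BS v) \<omega>"
    using elim(1) unfolding C_K_def by (intro mult_right_mono) (simp_all add: m_nu_def)
  then show ?case
    using sum_kernel_le[OF K] elim(2) space_nu by (blast intro: order_trans add_right_mono)
qed

text \<open>Subtracting the average of s over BS v is what makes the test kernel satisfy (A1).\<close>

definition test_kernel :: "'v \<Rightarrow> ((int \<Rightarrow> 'v) \<Rightarrow> complex) \<Rightarrow> 'v \<Rightarrow> (int \<Rightarrow> 'v) \<Rightarrow> complex" where
  "test_kernel v s x \<omega> =
     (if x = v then (indicator (BS v) \<omega> / (2 * m v)) *\<^sub>R (s \<omega> - avg \<nu> (BS v) s) else 0)"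

context
  fixes v :: 'v and s :: "(int \<Rightarrow> 'v) \<Rightarrow> complex"
  assumes s_meas [measurable]: "s \<in> borel_measurable \<nu>" and s_le_1: "\<And>\<omega>. cmod (s \<omega>) \<le> 1"
begin

lemma integrable_bsector_phase: "integrable \<nu> (\<lambda>\<omega>. indicator (BS v) \<omega> *\<^sub>R s \<omega>)"
  using s_le_1 by (intro Bochner_Integration.integrable_bound[OF integrable_indicator_bsector[of v]])
    (auto split: split_indicator)

lemma integral_bsector_phase:
  "integral\<^sup>L \<nu> (\<lambda>\<omega>. indicator (BS v) \<omega> *\<^sub>R s \<omega>) = m v *\<^sub>R avg \<nu> (BS v) s"
  using m_nu_pos[of v] unfolding avg_def set_lebesgue_integral_def m_nu_def by simp

lemma norm_avg_phase_le_1: "cmod (avg \<nu> (BS v) s) \<le> 1"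
proof -
  have "m v * cmod (avg \<nu> (BS v) s) \<le> integral\<^sup>L \<nu> (\<lambda>\<omega>. norm (indicator (BS v) \<omega> *\<^sub>R s \<omega>))"
    using integral_norm_bound[of \<nu> "\<lambda>\<omega>. indicator (BS v) \<omega> *\<^sub>R s \<omega>"] m_nu_pos[of v]
    by (simp add: integral_bsector_phase)
  also have "\<dots> \<le> integral\<^sup>L \<nu> (\<lambda>\<omega>. indicator (BS v) \<omega> :: real)"
    using integrable_norm[OF integrable_bsector_phase] integrable_indicator_bsector s_le_1
    by (intro integral_mono) (auto split: split_indicator)
  finally have "m v * cmod (avg \<nu> (BS v) s) \<le> m v" by (simp add: m_nu_def)
  then show ?thesis using m_nu_pos[of v] by (simp add: mult_le_cancel_left1)
qed

lemma norm_test_kernel_le: "cmod (test_kernel v s x \<omega>) \<le> indicator (BS v) \<omega> / m v"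
proof -
  have "cmod (s \<omega> - avg \<nu> (BS v) s) \<le> 2"
    using norm_triangle_ineq4[of "s \<omega>" "avg \<nu> (BS v) s"] s_le_1[of \<omega>] norm_avg_phase_le_1 by linarith
  moreover have "cmod (test_kernel v s x \<omega>) \<le> indicator (BS v) \<omega> / (2 * m v) * cmod (s \<omega> - avg \<nu> (BS v) s)"
    using m_nu_pos[of v] unfolding test_kernel_def by (auto split: split_indicator)
  ultimately show ?thesis
    using m_nu_pos[of v] by (auto split: split_indicator simp: field_simps)
qed

lemma test_kernel_A1: "A1 \<nu> (test_kernel v s)"
  unfolding A1_def
proof
  fix x
  have "test_kernel v s x = (\<lambda>\<omega>. (if x = v then 1 / (2 * m v) else 0) *\<^sub>R
      (indicator (BS v) \<omega> *\<^sub>R s \<omega> - indicator (BS v) \<omega> *\<^sub>R avg \<nu> (BS v) s))"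
    unfolding test_kernel_def by (auto simp: scaleR_right_diff_distrib)
  moreover have "integral\<^sup>L \<nu> (\<lambda>\<omega>. indicator (BS v) \<omega> *\<^sub>R avg \<nu> (BS v) s) = m v *\<^sub>R avg \<nu> (BS v) s"
    using integrable_indicator_bsector[of v]
    by (subst Bochner_Integration.integral_scaleR_left) (simp_all add: m_nu_def)
  ultimately show "integrable \<nu> (test_kernel v s x) \<and> integral\<^sup>L \<nu> (test_kernel v s x) = 0"
    using integrable_bsector_phase integrable_indicator_bsector[of v]
    by (simp add: integral_bsector_phase Bochner_Integration.integral_diff m_nu_def)
qed

lemma C_K_test_kernel_le_1: "C_K o' p \<nu> (test_kernel v s) \<le> 1"
proof -
  have single: "(\<Sum>\<^sub>\<infinity>x\<in>UNIV. ennreal (cmod (test_kernel v s x \<omega>) * m x))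
      = ennreal (cmod (test_kernel v s v \<omega>) * m v)" for \<omega>
    by (subst infsum_cong_neutral[where T = "{v}"]) (auto simp: test_kernel_def)
  have "ennreal (cmod (test_kernel v s v \<omega>) * m v) \<le> 1" for \<omega>
  proof -
    have "cmod (test_kernel v s v \<omega>) * m v \<le> indicator (BS v) \<omega>"
      using mult_right_mono[OF norm_test_kernel_le[of v \<omega>], of "m v"] m_nu_pos[of v] by simp
    also have "\<dots> \<le> 1" by (simp split: split_indicator)
    finally show ?thesis by (simp add: ennreal_le_1)
  qed
  moreover note [measurable] = borel_measurable_kernel[OF test_kernel_A1, of v]
  ultimately show ?thesis
    unfolding C_K_def single by (intro esssup_I) auto
qed

lemma test_kernel_A3: "A3 o' p \<nu> (test_kernel v s) 1"
  unfolding A3_def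
proof (intro conjI allI ballI)
  fix x \<omega> assume "\<omega> \<in> BD"
  show "cmod (test_kernel v s x \<omega>) \<le> m x powr 1 / m (conf_vb p x \<omega>) powr (1 + 1)"
  proof (cases "x = v \<and> \<omega> \<in> BS v")
    case True
    then have "m x powr 1 / m (conf_vb p x \<omega>) powr (1 + 1) = 1 / m v"
      using conf_vb_self m_nu_pos[of v] by (simp add: powr_add power2_eq_square)
    then show ?thesis using True norm_test_kernel_le[of x \<omega>] by simp
  qed (auto simp: test_kernel_def)
qed simp

lemma test_kernel_in_class_O: "in_class_O o' p \<nu> (test_kernel v s)"
  unfolding in_class_O_def A2_def
  using test_kernel_A1 test_kernel_A3 C_K_test_kernel_le_1 by (auto simp: order_le_less_trans)

end

end

section \<open>Functions of bounded mean oscillation\<close>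

locale loc_integrable = tree_boundary_measure o' p \<nu> for o' :: 'v and p \<nu> +
  fixes b :: "(int \<Rightarrow> 'v) \<Rightarrow> complex"
  assumes loc: "L1loc o' p \<nu> b"
begin

abbreviation "ab x \<equiv> avg \<nu> (BS x) b"

lemma borel_measurable_b [measurable]: "b \<in> borel_measurable \<nu>"
  using loc unfolding L1loc_def by blast

lemma integrable_bsector_diff: "integrable \<nu> (\<lambda>\<omega>. indicator (BS x) \<omega> *\<^sub>R (b \<omega> - c))"
proof -
  have "integrable \<nu> (\<lambda>\<omega>. indicator (BS x) \<omega> *\<^sub>R b \<omega> - indicator (BS x) \<omega> *\<^sub>R c)"
    using loc integrable_indicator_bsector unfolding L1loc_def set_integrable_def
    by (intro Bochner_Integration.integrable_diff integrable_scaleR_left) auto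
  then show ?thesis by (simp add: scaleR_right_diff_distrib)
qed

lemma integral_bsector_diff:
  "integral\<^sup>L \<nu> (\<lambda>\<omega>. indicator (BS x) \<omega> *\<^sub>R (b \<omega> - c)) = m x *\<^sub>R (ab x - c)"
proof -
  have "integral\<^sup>L \<nu> (\<lambda>\<omega>. indicator (BS x) \<omega> *\<^sub>R (b \<omega> - c)) =
     integral\<^sup>L \<nu> (\<lambda>\<omega>. indicator (BS x) \<omega> *\<^sub>R b \<omega> - indicator (BS x) \<omega> *\<^sub>R c)"
    by (simp add: scaleR_right_diff_distrib)
  also have "\<dots> = m x *\<^sub>R ab x - m x *\<^sub>R c"
    using loc integrable_indicator_bsector integral_indicator_bsector m_nu_pos[of x]
    unfolding L1loc_def set_integrable_def avg_def set_lebesgue_integral_def m_nu_def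
    by (subst Bochner_Integration.integral_diff) auto
  finally show ?thesis by (simp add: scaleR_right_diff_distrib)
qed

definition sector_dev :: "'v \<Rightarrow> complex \<Rightarrow> ennreal" where
  "sector_dev x c = (\<integral>\<^sup>+ \<omega>. ennreal (cmod (b \<omega> - c)) * indicator (BS x) \<omega> \<partial>\<nu>)"

lemma ennreal_norm_indicator_scaleR:
  "ennreal (norm (indicator A \<omega> *\<^sub>R (z::complex))) = ennreal (cmod z) * indicator A \<omega>"
  by (simp split: split_indicator)

lemma sector_dev_ge: "ennreal (cmod (ab x - c) * m x) \<le> sector_dev x c"
proof -
  have "ennreal (cmod (ab x - c) * m x) =
      ennreal (norm (integral\<^sup>L \<nu> (\<lambda>\<omega>. indicator (BS x) \<omega> *\<^sub>R (b \<omega> - c))))"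
    using integral_bsector_diff m_nu_pos[of x] by (simp add: mult.commute)
  also have "\<dots> \<le> sector_dev x c"
    using integral_norm_bound_ennreal[OF integrable_bsector_diff]
    unfolding sector_dev_def ennreal_norm_indicator_scaleR .
  finally show ?thesis .
qed

lemma sector_dev_avg:
  "sector_dev x (ab x) = ennreal (LINT \<omega>:BS x|\<nu>. cmod (b \<omega> - ab x))"
proof -
  have "sector_dev x (ab x) = (\<integral>\<^sup>+ \<omega>. norm (indicator (BS x) \<omega> *\<^sub>R (b \<omega> - ab x)) \<partial>\<nu>)"
    unfolding sector_dev_def ennreal_norm_indicator_scaleR ..
  also have "\<dots> = ennreal (integral\<^sup>L \<nu> (\<lambda>\<omega>. norm (indicator (BS x) \<omega> *\<^sub>R (b \<omega> - ab x))))"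
    using integrable_norm[OF integrable_bsector_diff] by (intro nn_integral_eq_integral) auto
  finally show ?thesis
    unfolding set_lebesgue_integral_def by (simp add: abs_mult)
qed

lemma sector_dev_mono: "BS x \<subseteq> BS y \<Longrightarrow> sector_dev x c \<le> sector_dev y c"
  unfolding sector_dev_def by (intro nn_integral_mono) (auto split: split_indicator)

lemma sector_dev_triangle: "sector_dev x c \<le> sector_dev x c' + ennreal (cmod (c' - c) * m x)"
proof -
  have "sector_dev x c \<le> (\<integral>\<^sup>+ \<omega>. ennreal (cmod (b \<omega> - c')) * indicator (BS x) \<omega> +
      ennreal (cmod (c' - c)) * indicator (BS x) \<omega> \<partial>\<nu>)"
    unfolding sector_dev_def
  proof (intro nn_integral_mono)
    fix \<omega>
    have "cmod (b \<omega> - c) \<le> cmod (b \<omega> - c') + cmod (c' - c)"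
      using norm_triangle_ineq[of "b \<omega> - c'" "c' - c"] by simp
    then show "ennreal (cmod (b \<omega> - c)) * indicator (BS x) \<omega> \<le>
        ennreal (cmod (b \<omega> - c')) * indicator (BS x) \<omega> + ennreal (cmod (c' - c)) * indicator (BS x) \<omega>"
      by (auto split: split_indicator simp: ennreal_plus[symmetric] simp del: ennreal_plus)
  qed
  also have "\<dots> = sector_dev x c' + ennreal (cmod (c' - c)) * emeasure \<nu> (BS x)"
    unfolding sector_dev_def by (simp add: nn_integral_add nn_integral_cmult_indicator)
  finally show ?thesis by (simp add: emeasure_bsector ennreal_mult')
qed

lemma Kop_test_kernel:
  assumes [measurable]: "s \<in> borel_measurable \<nu>" and s_le_1: "\<And>\<omega>. cmod (s \<omega>) \<le> 1"
    and int: "integrable \<nu> (\<lambda>\<omega>. test_kernel v s v \<omega> * b \<omega>)"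
  shows "Kop \<nu> (test_kernel v s) b v
    = (1 / (2 * m v)) *\<^sub>R integral\<^sup>L \<nu> (\<lambda>\<omega>. s \<omega> * (indicator (BS v) \<omega> *\<^sub>R (b \<omega> - ab v)))"
proof -
  let ?K = "test_kernel v s v" and ?z = "\<lambda>\<omega>. indicator (BS v) \<omega> *\<^sub>R (b \<omega> - ab v)"
  have A1: "integrable \<nu> ?K" "integral\<^sup>L \<nu> ?K = 0"
    using test_kernel_A1[OF assms(1,2)] unfolding A1_def by blast+
  note [measurable] = borel_measurable_kernel[OF test_kernel_A1[OF assms(1,2)], of v]
  have int_sz: "integrable \<nu> (\<lambda>\<omega>. s \<omega> * ?z \<omega>)"
    using s_le_1
    by (intro Bochner_Integration.integrable_bound[OF integrable_norm[OF integrable_bsector_diff[of v "ab v"]]])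
      (auto simp: norm_mult mult_left_le_one_le split: split_indicator)
  have "Kop \<nu> (test_kernel v s) b v = integral\<^sup>L \<nu> (\<lambda>\<omega>. ?K \<omega> * b \<omega> - ab v * ?K \<omega>)"
    using int A1 unfolding Kop_def by simp
  also have "(\<lambda>\<omega>. ?K \<omega> * b \<omega> - ab v * ?K \<omega>)
      = (\<lambda>\<omega>. (1 / (2 * m v)) *\<^sub>R (s \<omega> * ?z \<omega> - avg \<nu> (BS v) s * ?z \<omega>))"
    by (auto simp: test_kernel_def algebra_simps split: split_indicator)
  also have "integral\<^sup>L \<nu> \<dots> = (1 / (2 * m v)) *\<^sub>R
      (integral\<^sup>L \<nu> (\<lambda>\<omega>. s \<omega> * ?z \<omega>) - avg \<nu> (BS v) s * integral\<^sup>L \<nu> ?z)"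
    by (simp only: Bochner_Integration.integral_scaleR_right integral_mult_right_zero
        Bochner_Integration.integral_diff[OF int_sz integrable_mult_right[OF integrable_bsector_diff]])
  also have "integral\<^sup>L \<nu> ?z = 0" by (simp add: integral_bsector_diff)
  finally show ?thesis by simp
qed

text \<open>
  Conversely, testing the estimate against the kernel built from the phase of b - b_v
  recovers the mean oscillation of b on BS v, up to the factor 2 of the kernel.\<close>

lemma mean_oscillation_le:
  fixes f :: "real \<Rightarrow> real \<Rightarrow> real"
  assumes f0: "\<forall>c \<alpha>. c \<ge> 0 \<longrightarrow> \<alpha> > 0 \<longrightarrow> f c \<alpha> \<ge> 0"
    and fmono: "\<forall>\<alpha>>0. mono_on {0..} (\<lambda>c. f c \<alpha>)"
    and fK: "\<forall>K \<alpha>. in_class_O o' p \<nu> K \<longrightarrow> A3 o' p \<nu> K \<alpha> \<longrightarrow>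
          (\<forall>x. integrable \<nu> (\<lambda>\<omega>. K x \<omega> * b \<omega>)) \<and>
          (\<forall>v. (\<Sum>\<^sub>\<infinity>x\<in>sector p v. ennreal (cmod (Kop \<nu> K b x) * m x))
                 \<le> ennreal (f (enn2real (C_K o' p \<nu> K)) \<alpha> * m v))"
  shows "(1 / measure \<nu> (BS v)) * (LINT \<omega>:BS v|\<nu>. cmod (b \<omega> - ab v)) \<le> 2 * f 1 1"
proof -
  define s where "s \<omega> = cnj (sgn (b \<omega> - ab v))" for \<omega>
  have "(\<lambda>\<omega>. sgn (b \<omega> - ab v)) \<in> borel_measurable \<nu>" by measurable
  then have [measurable]: "s \<in> borel_measurable \<nu>"
    unfolding s_def by (rule borel_measurable_continuous_on[where f = cnj, rotated]) (intro continuous_intros)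
  have s_le_1: "cmod (s \<omega>) \<le> 1" for \<omega> unfolding s_def by (simp add: norm_sgn)
  let ?K = "test_kernel v s"
  have K: "in_class_O o' p \<nu> ?K" "A3 o' p \<nu> ?K 1"
    using test_kernel_in_class_O test_kernel_A3 s_le_1 by auto
  define I where "I = (LINT \<omega>:BS v|\<nu>. cmod (b \<omega> - ab v))"
  have "(\<lambda>\<omega>. s \<omega> * (indicator (BS v) \<omega> *\<^sub>R (b \<omega> - ab v)))
      = (\<lambda>\<omega>. complex_of_real (indicator (BS v) \<omega> *\<^sub>R cmod (b \<omega> - ab v)))"
    by (auto simp: s_def cnj_sgn_mult split: split_indicator)
  then have "integral\<^sup>L \<nu> (\<lambda>\<omega>. s \<omega> * (indicator (BS v) \<omega> *\<^sub>R (b \<omega> - ab v))) = complex_of_real I"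
    unfolding I_def set_lebesgue_integral_def by (simp only: integral_complex_of_real)
  then have "cmod (Kop \<nu> ?K b v) = I / (2 * m v)"
    using Kop_test_kernel[of s v] s_le_1 fK K m_nu_pos[of v] by (auto simp: I_def set_lebesgue_integral_def)
  moreover have "ennreal (cmod (Kop \<nu> ?K b v) * m v) \<le> ennreal (f (enn2real (C_K o' p \<nu> ?K)) 1 * m v)"
  proof -
    have "v \<in> sector p v" unfolding mem_sector_iff by (rule exI[of _ 0]) simp
    then have "ennreal (cmod (Kop \<nu> ?K b v) * m v)
        \<le> (\<Sum>\<^sub>\<infinity>x\<in>sector p v. ennreal (cmod (Kop \<nu> ?K b x) * m x))"
      using ennreal_sum_le_infsum[of "{v}"] by simp
    then show ?thesis using fK K by (meson order_trans)
  qed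
  moreover have "f (enn2real (C_K o' p \<nu> ?K)) 1 \<le> f 1 1"
    using fmono enn2real_mono[OF C_K_test_kernel_le_1[OF _ s_le_1]] unfolding mono_on_def by auto
  ultimately have "I / (2 * m v) * m v \<le> f 1 1 * m v"
    using f0 m_nu_pos[of v] by (auto simp: ennreal_le_iff intro: order_trans mult_right_mono)
  then show ?thesis using m_nu_pos[of v] unfolding I_def m_nu_def by (simp add: field_simps)
qed

end

locale bmo_function = loc_integrable +
  assumes bmo: "in_BMO o' p \<nu> b"
begin

definition bmo_bound :: real where
  "bmo_bound = (SOME C. \<forall>x. (1 / measure \<nu> (BS x)) * (LINT \<omega>:BS x|\<nu>. cmod (b \<omega> - ab x)) \<le> C)"

lemma bmo_bound: "(LINT \<omega>:BS x|\<nu>. cmod (b \<omega> - ab x)) \<le> bmo_bound * m x"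
proof -
  have "(1 / m x) * (LINT \<omega>:BS x|\<nu>. cmod (b \<omega> - ab x)) \<le> bmo_bound"
    using someI_ex[OF bmo[unfolded in_BMO_def, THEN conjunct2]]
    unfolding bmo_bound_def[symmetric] m_nu_def by blast
  then show ?thesis using m_nu_pos[of x] by (simp add: field_simps)
qed

lemma bmo_bound_nonneg: "bmo_bound \<ge> 0"
proof -
  have "0 \<le> (LINT \<omega>:BS o'|\<nu>. cmod (b \<omega> - ab o'))"
    unfolding set_lebesgue_integral_def by (intro integral_nonneg_AE) auto
  then show ?thesis
    using bmo_bound[of o'] m_nu_pos[of o'] by (meson order.trans zero_le_mult_iff not_le)
qed

lemma sector_dev_avg_le: "sector_dev x (ab x) \<le> ennreal (bmo_bound * m x)"
  unfolding sector_dev_avg using bmo_bound by (rule ennreal_leI)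

lemma avg_parent_diff: "cmod (ab x - ab (p x)) \<le> dbl_ratio * bmo_bound"
proof -
  have "ennreal (cmod (ab x - ab (p x)) * m x) \<le> sector_dev x (ab (p x))" by (rule sector_dev_ge)
  also have "\<dots> \<le> sector_dev (p x) (ab (p x))" using bsector_subset_parent by (rule sector_dev_mono)
  also have "\<dots> \<le> ennreal (bmo_bound * m (p x))" by (rule sector_dev_avg_le)
  also have "\<dots> \<le> ennreal (dbl_ratio * bmo_bound * m x)"
    using mult_left_mono[OF m_nu_parent_le[of x] bmo_bound_nonneg]
    by (intro ennreal_leI) (simp add: mult_ac)
  finally have "ennreal (cmod (ab x - ab (p x)) * m x) \<le> ennreal (dbl_ratio * bmo_bound * m x)" .
  moreover have "0 \<le> dbl_ratio * bmo_bound * m x"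
    using bmo_bound_nonneg dbl_ratio_gt_1 m_nu_pos[of x] by simp
  ultimately have "cmod (ab x - ab (p x)) * m x \<le> dbl_ratio * bmo_bound * m x"
    using ennreal_le_iff by blast
  then show ?thesis using m_nu_pos[of x] by simp
qed

lemma avg_funpow_diff: "cmod (ab ((p ^^ k) v) - ab v) \<le> real k * dbl_ratio * bmo_bound"
proof (induction k)
  case (Suc k)
  have "cmod (ab ((p ^^ Suc k) v) - ab ((p ^^ k) v)) \<le> dbl_ratio * bmo_bound"
    using avg_parent_diff[of "(p ^^ k) v"] by (simp add: norm_minus_commute)
  from norm_diff_triangle_le[OF this Suc] show ?case by (simp add: algebra_simps)
qed simp

lemma sector_dev_funpow_le:
  "sector_dev ((p ^^ k) v) (ab v) \<le> ennreal (real (Suc k) * dbl_ratio * bmo_bound * m ((p ^^ k) v))"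
proof -
  let ?w = "(p ^^ k) v"
  have "sector_dev ?w (ab v) \<le> sector_dev ?w (ab ?w) + ennreal (cmod (ab ?w - ab v) * m ?w)"
    by (rule sector_dev_triangle)
  also have "\<dots> \<le> ennreal (bmo_bound * m ?w) + ennreal (real k * dbl_ratio * bmo_bound * m ?w)"
    using sector_dev_avg_le avg_funpow_diff[of k v] m_nu_pos[of ?w]
    by (intro add_mono ennreal_leI mult_right_mono) auto
  also have "\<dots> = ennreal (bmo_bound * m ?w + real k * dbl_ratio * bmo_bound * m ?w)"
    using bmo_bound_nonneg dbl_ratio_gt_1 m_nu_pos[of ?w] by (simp add: ennreal_plus)
  also have "\<dots> \<le> ennreal (real (Suc k) * dbl_ratio * bmo_bound * m ?w)"
  proof (intro ennreal_leI)
    have "bmo_bound * m ?w \<le> dbl_ratio * bmo_bound * m ?w"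
      using mult_right_mono[of 1 dbl_ratio "bmo_bound * m ?w"] dbl_ratio_gt_1 bmo_bound_nonneg
        m_nu_pos[of ?w] by (simp add: mult.assoc)
    then show "bmo_bound * m ?w + real k * dbl_ratio * bmo_bound * m ?w
        \<le> real (Suc k) * dbl_ratio * bmo_bound * m ?w" by (simp add: algebra_simps)
  qed
  finally show ?thesis .
qed

text \<open>
  On BS (p^k v) the function b deviates from b_v by O(k) times the BMO bound, while the
  kernel weights decay geometrically in k.\<close>

lemma nn_integral_majorant_dev_le:
  assumes a: "\<alpha> > 0"
  shows "(\<integral>\<^sup>+ \<omega>. kernel_majorant \<alpha> v \<omega> * ennreal (cmod (b \<omega> - ab v)) \<partial>\<nu>)
    \<le> ennreal (dbl_ratio * bmo_bound * geom_sum \<alpha> ^ 2)"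
proof -
  let ?r = "decay powr \<alpha>" and ?E = "\<lambda>\<omega>. ennreal (cmod (b \<omega> - ab v))"
  let ?W = "\<lambda>k. ennreal (kernel_weight \<alpha> v k)"
  have "(\<integral>\<^sup>+ \<omega>. kernel_majorant \<alpha> v \<omega> * ?E \<omega> \<partial>\<nu>)
      = (\<integral>\<^sup>+ \<omega>. (\<Sum>k. ?W k * (?E \<omega> * indicator (BS ((p ^^ k) v)) \<omega>)) \<partial>\<nu>)"
    unfolding kernel_majorant_def ennreal_suminf_multc[symmetric] by (simp only: mult_ac)
  also have "\<dots> = (\<Sum>k. ?W k * sector_dev ((p ^^ k) v) (ab v))"
    unfolding sector_dev_def by (subst nn_integral_suminf) (simp_all add: nn_integral_cmult)
  also have "\<dots> \<le> (\<Sum>k. ennreal (dbl_ratio * bmo_bound) * ennreal (real (Suc k) * ?r ^ k))"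
  proof (intro suminf_le allI)
    fix k
    let ?w = "(p ^^ k) v"
    have "?W k * sector_dev ?w (ab v)
        \<le> ennreal (kernel_weight \<alpha> v k * (real (Suc k) * dbl_ratio * bmo_bound * m ?w))"
      using mult_left_mono[OF sector_dev_funpow_le, of "?W k" k v] kernel_weight_nonneg
      by (simp add: ennreal_mult')
    also have "\<dots> = ennreal (dbl_ratio * bmo_bound * real (Suc k) * (kernel_weight \<alpha> v k * m ?w))"
      by (simp add: ac_simps)
    also have "\<dots> \<le> ennreal (dbl_ratio * bmo_bound * real (Suc k) * ?r ^ k)"
      using kernel_weight_mass_le[OF a] dbl_ratio_gt_1 bmo_bound_nonneg
      by (intro ennreal_leI mult_left_mono) auto
    finally show "?W k * sector_dev ?w (ab v)
        \<le> ennreal (dbl_ratio * bmo_bound) * ennreal (real (Suc k) * ?r ^ k)"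
      using dbl_ratio_gt_1 bmo_bound_nonneg by (simp add: ennreal_mult mult.assoc)
  qed auto
  also have "\<dots> = ennreal (dbl_ratio * bmo_bound * geom_sum \<alpha> ^ 2)"
    using suminf_ennreal_Suc_geometric[of ?r] decay_powr_pos decay_powr_less_1[OF a]
      dbl_ratio_gt_1 bmo_bound_nonneg
    by (simp add: ennreal_suminf_cmult geom_sum_def ennreal_mult)
  finally show ?thesis .
qed

lemma integrable_kernel_mult_diff:
  assumes O: "in_class_O o' p \<nu> K" and K: "A3 o' p \<nu> K \<alpha>"
  shows "integrable \<nu> (\<lambda>\<omega>. K x \<omega> * (b \<omega> - c))"
proof -
  have a: "\<alpha> > 0" using K unfolding A3_def by blast
  have A1: "A1 \<nu> K" using O unfolding in_class_O_def by blast
  note [measurable] = borel_measurable_kernel[OF A1]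
  have "(\<integral>\<^sup>+ \<omega>. ennreal (norm (K x \<omega> * (b \<omega> - ab x))) \<partial>\<nu>)
      \<le> (\<integral>\<^sup>+ \<omega>. kernel_majorant \<alpha> x \<omega> * ennreal (cmod (b \<omega> - ab x)) \<partial>\<nu>)"
  proof (intro nn_integral_mono)
    fix \<omega> assume "\<omega> \<in> space \<nu>"
    then have "ennreal (cmod (K x \<omega>)) \<le> kernel_majorant \<alpha> x \<omega>"
      using norm_kernel_le_weight[OF K] kernel_weight_le_majorant space_nu
      by (metis ennreal_leI order_trans)
    then show "ennreal (norm (K x \<omega> * (b \<omega> - ab x))) \<le> kernel_majorant \<alpha> x \<omega> * ennreal (cmod (b \<omega> - ab x))"
      by (simp add: norm_mult ennreal_mult' mult_right_mono)
  qed
  also have "\<dots> < \<infinity>"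
    using nn_integral_majorant_dev_le[OF a, of x] by (simp add: order.strict_trans1)
  finally have "integrable \<nu> (\<lambda>\<omega>. K x \<omega> * (b \<omega> - ab x))"
    by (intro integrableI_bounded) auto
  moreover have "integrable \<nu> (\<lambda>\<omega>. (ab x - c) * K x \<omega>)"
    using A1 unfolding A1_def by (blast intro: integrable_mult_right)
  ultimately have "integrable \<nu> (\<lambda>\<omega>. K x \<omega> * (b \<omega> - ab x) + (ab x - c) * K x \<omega>)"
    by (rule Bochner_Integration.integrable_add)
  then show ?thesis by (simp add: algebra_simps)
qed

lemma integrable_kernel_mult:
  "in_class_O o' p \<nu> K \<Longrightarrow> A3 o' p \<nu> K \<alpha> \<Longrightarrow> integrable \<nu> (\<lambda>\<omega>. K x \<omega> * b \<omega>)"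
  using integrable_kernel_mult_diff[of K \<alpha> x 0] by simp

lemma Kop_eq_integral_diff:
  assumes O: "in_class_O o' p \<nu> K" and K: "A3 o' p \<nu> K \<alpha>"
  shows "Kop \<nu> K b x = integral\<^sup>L \<nu> (\<lambda>\<omega>. K x \<omega> * (b \<omega> - c))"
proof -
  have A1: "integrable \<nu> (K x)" "integral\<^sup>L \<nu> (K x) = 0"
    using O unfolding in_class_O_def A1_def by blast+
  have "integral\<^sup>L \<nu> (\<lambda>\<omega>. K x \<omega> * b \<omega> - c * K x \<omega>) = Kop \<nu> K b x - c * integral\<^sup>L \<nu> (K x)"
    using integrable_kernel_mult[OF O K, of x] A1(1) unfolding Kop_def by simp
  then show ?thesis using A1(2) by (simp add: algebra_simps)
qed

lemma norm_Kop_le: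
  assumes O: "in_class_O o' p \<nu> K" and K: "A3 o' p \<nu> K \<alpha>"
  shows "ennreal (cmod (Kop \<nu> K b x) * m x)
    \<le> (\<integral>\<^sup>+ \<omega>. ennreal (cmod (K x \<omega>) * m x) * ennreal (cmod (b \<omega> - c)) \<partial>\<nu>)"
proof -
  have A1: "A1 \<nu> K" using O unfolding in_class_O_def by blast
  note [measurable] = borel_measurable_kernel[OF A1]
  have "ennreal (cmod (Kop \<nu> K b x)) \<le> (\<integral>\<^sup>+ \<omega>. norm (K x \<omega> * (b \<omega> - c)) \<partial>\<nu>)"
    unfolding Kop_eq_integral_diff[OF O K, of x c]
    by (rule integral_norm_bound_ennreal[OF integrable_kernel_mult_diff[OF O K]])
  then have "ennreal (m x) * ennreal (cmod (Kop \<nu> K b x))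
      \<le> ennreal (m x) * (\<integral>\<^sup>+ \<omega>. norm (K x \<omega> * (b \<omega> - c)) \<partial>\<nu>)"
    by (rule mult_left_mono) simp
  also have "\<dots> = (\<integral>\<^sup>+ \<omega>. ennreal (cmod (K x \<omega>) * m x) * ennreal (cmod (b \<omega> - c)) \<partial>\<nu>)"
    using m_nu_pos[of x] by (simp add: nn_integral_cmult[symmetric] norm_mult ennreal_mult' mult_ac)
  finally show ?thesis using m_nu_pos[of x] by (simp add: ennreal_mult' mult.commute)
qed

lemma nn_integral_kernel_bound_dev_le:
  assumes a: "\<alpha> > 0" and c: "c \<ge> 0"
  shows "(\<integral>\<^sup>+ \<omega>. (ennreal c * indicator (BS v) \<omega> + ennreal (geom_sum \<alpha> * m v) * kernel_majorant \<alpha> v \<omega>)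
      * ennreal (cmod (b \<omega> - ab v)) \<partial>\<nu>) \<le> ennreal (bmo_bound * (c + dbl_ratio * geom_sum \<alpha> ^ 3) * m v)"
    (is "?I \<le> _")
proof -
  let ?E = "\<lambda>\<omega>. ennreal (cmod (b \<omega> - ab v))"
  have "?I = (\<integral>\<^sup>+ \<omega>. ennreal c * (?E \<omega> * indicator (BS v) \<omega>) +
      ennreal (geom_sum \<alpha> * m v) * (kernel_majorant \<alpha> v \<omega> * ?E \<omega>) \<partial>\<nu>)"
    by (intro nn_integral_cong) (simp add: algebra_simps)
  also have "\<dots> = ennreal c * sector_dev v (ab v) +
      ennreal (geom_sum \<alpha> * m v) * (\<integral>\<^sup>+ \<omega>. kernel_majorant \<alpha> v \<omega> * ?E \<omega> \<partial>\<nu>)"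
    unfolding sector_dev_def by (subst nn_integral_add) (simp_all add: nn_integral_cmult)
  also have "\<dots> \<le> ennreal c * ennreal (bmo_bound * m v) +
      ennreal (geom_sum \<alpha> * m v) * ennreal (dbl_ratio * bmo_bound * geom_sum \<alpha> ^ 2)"
    by (intro add_mono mult_left_mono sector_dev_avg_le nn_integral_majorant_dev_le[OF a]) auto
  also have "\<dots> = ennreal (c * (bmo_bound * m v) + geom_sum \<alpha> * m v * (dbl_ratio * bmo_bound * geom_sum \<alpha> ^ 2))"
    using c bmo_bound_nonneg m_nu_pos[of v] geom_sum_pos[OF a] dbl_ratio_gt_1
    by (simp add: ennreal_mult ennreal_plus)
  also have "\<dots> = ennreal (bmo_bound * (c + dbl_ratio * geom_sum \<alpha> ^ 3) * m v)"
    by (simp add: algebra_simps power2_eq_square power3_eq_cube)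
  finally show ?thesis .
qed

lemma sector_sum_Kop_le:
  assumes O: "in_class_O o' p \<nu> K" and K: "A3 o' p \<nu> K \<alpha>"
  shows "(\<Sum>\<^sub>\<infinity>x\<in>sector p v. ennreal (cmod (Kop \<nu> K b x) * m x))
    \<le> ennreal (bmo_bound * (enn2real (C_K o' p \<nu> K) + dbl_ratio * geom_sum \<alpha> ^ 3) * m v)"
proof (rule infsum_le_finite_sums)
  show "(\<lambda>x. ennreal (cmod (Kop \<nu> K b x) * m x)) summable_on sector p v"
    by (rule nonneg_summable_on_complete) simp
  have a: "\<alpha> > 0" using K unfolding A3_def by blast
  have A1: "A1 \<nu> K" using O unfolding in_class_O_def by blast
  note [measurable] = borel_measurable_kernel[OF A1]
  let ?E = "\<lambda>\<omega>. ennreal (cmod (b \<omega> - ab v))"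
  fix F assume F: "finite F" "F \<subseteq> sector p v"
  have "(\<Sum>x\<in>F. ennreal (cmod (Kop \<nu> K b x) * m x))
      \<le> (\<Sum>x\<in>F. \<integral>\<^sup>+ \<omega>. ennreal (cmod (K x \<omega>) * m x) * ?E \<omega> \<partial>\<nu>)"
    by (intro sum_mono norm_Kop_le[OF O K])
  also have "\<dots> = (\<integral>\<^sup>+ \<omega>. (\<Sum>x\<in>F. ennreal (cmod (K x \<omega>) * m x)) * ?E \<omega> \<partial>\<nu>)"
    unfolding sum_distrib_right by (rule nn_integral_sum[symmetric]) measurable
  also have "\<dots> \<le> (\<integral>\<^sup>+ \<omega>. (ennreal (enn2real (C_K o' p \<nu> K)) * indicator (BS v) \<omega> +
      ennreal (geom_sum \<alpha> * m v) * kernel_majorant \<alpha> v \<omega>) * ?E \<omega> \<partial>\<nu>)"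
    using AE_sum_kernel_le[OF O K, of v] F
    by (intro nn_integral_mono_AE) (auto elim!: eventually_mono intro: mult_right_mono)
  also have "\<dots> \<le> ennreal (bmo_bound * (enn2real (C_K o' p \<nu> K) + dbl_ratio * geom_sum \<alpha> ^ 3) * m v)"
    by (rule nn_integral_kernel_bound_dev_le[OF a]) simp
  finally show "(\<Sum>x\<in>F. ennreal (cmod (Kop \<nu> K b x) * m x)) \<le> \<dots>" .
qed

end

context loc_integrable
begin

text \<open>Condition (ii): |Kb| m_nu is a Carleson measure on T, uniformly over class O.\<close>

definition uniform_carleson_bound :: "(real \<Rightarrow> real \<Rightarrow> real) \<Rightarrow> bool" where
  "uniform_carleson_bound f \<longleftrightarrow>
     (\<forall>c \<alpha>. c \<ge> 0 \<longrightarrow> \<alpha> > 0 \<longrightarrow> f c \<alpha> \<ge> 0) \<and>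
     (\<forall>\<alpha>>0. mono_on {0..} (\<lambda>c. f c \<alpha>)) \<and>
     (\<forall>K \<alpha>. in_class_O o' p \<nu> K \<longrightarrow> A3 o' p \<nu> K \<alpha> \<longrightarrow>
        (\<forall>x. integrable \<nu> (\<lambda>\<omega>. K x \<omega> * b \<omega>)) \<and>
        (\<forall>v. (\<Sum>\<^sub>\<infinity>x\<in>sector p v. ennreal (cmod (Kop \<nu> K b x) * m_nu o' p \<nu> x))
               \<le> ennreal (f (enn2real (C_K o' p \<nu> K)) \<alpha> * m_nu o' p \<nu> v)))"

end

lemma (in bmo_function) uniform_carleson_bound_bmo:
  "uniform_carleson_bound (\<lambda>c \<alpha>. bmo_bound * (c + dbl_ratio * geom_sum \<alpha> ^ 3))"
  unfolding uniform_carleson_bound_def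
proof (intro conjI allI impI)
  fix c \<alpha> :: real assume "c \<ge> 0" "\<alpha> > 0"
  then show "bmo_bound * (c + dbl_ratio * geom_sum \<alpha> ^ 3) \<ge> 0"
    using bmo_bound_nonneg dbl_ratio_gt_1 geom_sum_pos[of \<alpha>]
    by (intro mult_nonneg_nonneg add_nonneg_nonneg) simp_all
next
  fix \<alpha> :: real
  show "mono_on {0..} (\<lambda>c. bmo_bound * (c + dbl_ratio * geom_sum \<alpha> ^ 3))"
    using bmo_bound_nonneg by (intro mono_onI) (simp add: mult_left_mono)
qed (use integrable_kernel_mult sector_sum_Kop_le in auto)

lemma (in loc_integrable) in_BMO_iff_uniform_carleson_bound:
  "in_BMO o' p \<nu> b \<longleftrightarrow> (\<exists>f. uniform_carleson_bound f)"
proof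
  assume "in_BMO o' p \<nu> b"
  then interpret bmo_function o' p \<nu> b by unfold_locales
  show "\<exists>f. uniform_carleson_bound f" using uniform_carleson_bound_bmo by blast
next
  assume "\<exists>f. uniform_carleson_bound f"
  then show "in_BMO o' p \<nu> b"
    using loc mean_oscillation_le unfolding in_BMO_def uniform_carleson_bound_def by blast
qed

theorem theorem3p2:
  fixes o' :: "'v" and p :: "'v \<Rightarrow> 'v" and \<nu> :: "(int \<Rightarrow> 'v) measure"
    and b :: "(int \<Rightarrow> 'v) \<Rightarrow> complex"
  assumes tree: "is_tree_with_end p"
    and two_succ: "\<forall>x. \<exists>y z. y \<in> succs p x \<and> z \<in> succs p x \<and> y \<noteq> z"
    and borel: "is_borel_measure_on_bdry o' p \<nu>"
    and dbl: "doubling o' p \<nu>"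
    and loc: "L1loc o' p \<nu> b"
  shows "in_BMO o' p \<nu> b \<longleftrightarrow>
    (\<exists>f :: real \<Rightarrow> real \<Rightarrow> real.
       (\<forall>c \<alpha>. c \<ge> 0 \<longrightarrow> \<alpha> > 0 \<longrightarrow> f c \<alpha> \<ge> 0) \<and>
       (\<forall>\<alpha>>0. mono_on {0..} (\<lambda>c. f c \<alpha>)) \<and>
       (\<forall>K \<alpha>. in_class_O o' p \<nu> K \<longrightarrow> A3 o' p \<nu> K \<alpha> \<longrightarrow>
          (\<forall>x. integrable \<nu> (\<lambda>\<omega>. K x \<omega> * b \<omega>)) \<and>
          (\<forall>v. (\<Sum>\<^sub>\<infinity>x\<in>sector p v. ennreal (cmod (Kop \<nu> K b x) * m_nu o' p \<nu> x))
                 \<le> ennreal (f (enn2real (C_K o' p \<nu> K)) \<alpha> * m_nu o' p \<nu> v))))"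
proof -
  interpret loc_integrable o' p \<nu> b
    by unfold_locales (fact tree two_succ borel dbl loc)+
  show ?thesis
    using in_BMO_iff_uniform_carleson_bound unfolding uniform_carleson_bound_def .
qed

end
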